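(* Let $\Omega$, $\mathbf{y}$, $Q$, $\hat{\mathbf{Y}}$, $\mathcal{M}(\mathbf{y},\hat{\mathbf{y}})$, $\mathbf{M}$, $E_m$, $f_L$ be as in the context, let $s>0$, and let $\sigma:\Omega\to(0,1)$ be arbitrary. Let $m^*\in\mathbf{M}$ be a minimizer over $\mathbf{M}$ of $$G(m)=\sum_{(\mathbf{p},\mathbf{q})\in E_m}\Big[\frac{\|\mathbf{p}-\mathbf{q}\|^2}{2s^2}+\log(1-\sigma(\mathbf{p}))-\log\sigma(\mathbf{p})\Big].$$ Then $\hat{\mathbf{y}}^*:=f_L(\mathbf{y},m^* )$ is a minimizer over $\hat{\mathbf{Y}}$ of $$F(\hat{\mathbf{y}})=\min_{m\in\mathcal{M}(\mathbf{y},\hat{\mathbf{y}})}\sum_{(\mathbf{p},\mathbf{q})\in E_m}\frac{\|\mathbf{p}-\mathbf{q}\|^2}{2s^2}\;-\;\sum_{\mathbf{p}\in\Omega}\Big[\hat{y}_{\mathbf{p}}\log\sigma(\mathbf{p})+(1-\hat{y}_{\mathbf{p}})\log(1-\sigma(\mathbf{p}))\Big],$$ and moreover $m^*$ attains the minimum $\min_{m\in\mathcal{M}(\mathbf{y},\hat{\mathbf{y}}^* )}\sum_{(\mathbf{p},\mathbf{q})\in E_m}\|\mathbf{p}-\mathbf{q}\|^2/(2s^2)$.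
   Context: $\Omega\subset\mathbb{Z}^2$ is a finite set of pixel locations, $\|\cdot\|$ the Euclidean norm, $\mathbf{y}\in\{0,1\}^{\Omega}$, $Q=\{\mathbf{q}\in\Omega: y_{\mathbf{q}}=1\}$, and for $\mathbf{z}\in\{0,1\}^{\Omega}$, $|\mathbf{z}|$ is the number of pixels with $z_{\mathbf{p}}=1$. $\hat{\mathbf{Y}}=\{\hat{\mathbf{y}}\in\{0,1\}^{\Omega}:|\hat{\mathbf{y}}|=|\mathbf{y}|\}$. For $\hat{\mathbf{y}}\in\hat{\mathbf{Y}}$, $\mathcal{M}(\mathbf{y},\hat{\mathbf{y}})$ is the set of one-to-one maps $m:Q\to\Omega$ with $\hat{y}_{m(\mathbf{q})}=1$ for all $\mathbf{q}\in Q$; $\mathbf{M}=\bigcup_{\hat{\mathbf{y}}\in\hat{\mathbf{Y}}}\mathcal{M}(\mathbf{y},\hat{\mathbf{y}})$. For $m\in\mathbf{M}$, $E_m=\{(m(\mathbf{q}),\mathbf{q}):\mathbf{q}\in Q\}$, and the label realization $f_L(\mathbf{y},m)\in\{0,1\}^{\Omega}$ is the indicator function of the image $m(Q)$. *)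

theory Defs
  imports "HOL-Analysis.Analysis" "HOL-Library.FuncSet"
begin

type_synonym pixel = "int \<times> int"

definition binimg :: "pixel set \<Rightarrow> (pixel \<Rightarrow> nat) set" where
  "binimg \<Omega> = {z. (\<forall>p\<in>\<Omega>. z p \<in> {0,1}) \<and> (\<forall>p. p \<notin> \<Omega> \<longrightarrow> z p = 0)}"

definition ones :: "pixel set \<Rightarrow> (pixel \<Rightarrow> nat) \<Rightarrow> pixel set" where
  "ones \<Omega> z = {p\<in>\<Omega>. z p = 1}"

definition card1 :: "pixel set \<Rightarrow> (pixel \<Rightarrow> nat) \<Rightarrow> nat" where
  "card1 \<Omega> z = card (ones \<Omega> z)"

definition Yhat :: "pixel set \<Rightarrow> (pixel \<Rightarrow> nat) \<Rightarrow> (pixel \<Rightarrow> nat) set" where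
  "Yhat \<Omega> y = {yh \<in> binimg \<Omega>. card1 \<Omega> yh = card1 \<Omega> y}"

definition Maps :: "pixel set \<Rightarrow> (pixel \<Rightarrow> nat) \<Rightarrow> (pixel \<Rightarrow> nat) \<Rightarrow> (pixel \<Rightarrow> pixel) set" where
  "Maps \<Omega> y yh = {m \<in> ones \<Omega> y \<rightarrow>\<^sub>E \<Omega>. inj_on m (ones \<Omega> y) \<and> (\<forall>q\<in>ones \<Omega> y. yh (m q) = 1)}"

definition AllMaps :: "pixel set \<Rightarrow> (pixel \<Rightarrow> nat) \<Rightarrow> (pixel \<Rightarrow> pixel) set" where
  "AllMaps \<Omega> y = (\<Union>yh\<in>Yhat \<Omega> y. Maps \<Omega> y yh)"

definition Edges :: "pixel set \<Rightarrow> (pixel \<Rightarrow> nat) \<Rightarrow> (pixel \<Rightarrow> pixel) \<Rightarrow> (pixel \<times> pixel) set" where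
  "Edges \<Omega> y m = {(m q, q) | q. q \<in> ones \<Omega> y}"

definition fL :: "pixel set \<Rightarrow> (pixel \<Rightarrow> nat) \<Rightarrow> (pixel \<Rightarrow> pixel) \<Rightarrow> (pixel \<Rightarrow> nat)" where
  "fL \<Omega> y m = (\<lambda>p. if p \<in> m ` ones \<Omega> y then 1 else 0)"

definition sqdist :: "pixel \<Rightarrow> pixel \<Rightarrow> real" where
  "sqdist p q = (real_of_int (fst p - fst q))\<^sup>2 + (real_of_int (snd p - snd q))\<^sup>2"

definition transport_cost :: "real \<Rightarrow> pixel set \<Rightarrow> (pixel \<Rightarrow> nat) \<Rightarrow> (pixel \<Rightarrow> pixel) \<Rightarrow> real" where
  "transport_cost s \<Omega> y m = (\<Sum>(p,q)\<in>Edges \<Omega> y m. sqdist p q / (2 * s\<^sup>2))"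

definition Gobj :: "real \<Rightarrow> (pixel \<Rightarrow> real) \<Rightarrow> pixel set \<Rightarrow> (pixel \<Rightarrow> nat) \<Rightarrow> (pixel \<Rightarrow> pixel) \<Rightarrow> real" where
  "Gobj s \<sigma> \<Omega> y m = (\<Sum>(p,q)\<in>Edges \<Omega> y m.
       sqdist p q / (2 * s\<^sup>2) + ln (1 - \<sigma> p) - ln (\<sigma> p))"

definition Fobj :: "real \<Rightarrow> (pixel \<Rightarrow> real) \<Rightarrow> pixel set \<Rightarrow> (pixel \<Rightarrow> nat) \<Rightarrow> (pixel \<Rightarrow> nat) \<Rightarrow> real" where
  "Fobj s \<sigma> \<Omega> y yh = Min (transport_cost s \<Omega> y ` Maps \<Omega> y yh)
     - (\<Sum>p\<in>\<Omega>. real (yh p) * ln (\<sigma> p) + (1 - real (yh p)) * ln (1 - \<sigma> p))"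

end

theory Submission
  imports Defs
begin

text \<open>The objective G splits as the transport cost of m plus a unary term that depends only on the
  image m(Q), i.e. on the label realization, while the likelihood term of F is a constant minus the
  same unary term. Hence F(yh) is, up to an additive constant, the minimum of G over the maps
  realizing yh, and minimizing G over all maps minimizes F. On the fibre of the realized labelling,
  G and the transport cost differ by a constant, so m* also minimizes the transport cost.\<close>

definition label_cost :: "(pixel \<Rightarrow> real) \<Rightarrow> pixel set \<Rightarrow> (pixel \<Rightarrow> nat) \<Rightarrow> real" where
  "label_cost \<sigma> \<Omega> yh = (\<Sum>p\<in>ones \<Omega> yh. ln (1 - \<sigma> p) - ln (\<sigma> p))"

lemma sum_Edges:
  "(\<Sum>(p,q)\<in>Edges \<Omega> y m. h p q) = (\<Sum>q\<in>ones \<Omega> y. h (m q) q)"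
proof -
  have "Edges \<Omega> y m = (\<lambda>q. (m q, q)) ` ones \<Omega> y"
    unfolding Edges_def by auto
  moreover have "inj_on (\<lambda>q. (m q, q)) (ones \<Omega> y)"
    by (auto simp: inj_on_def)
  ultimately show ?thesis
    by (simp add: sum.reindex)
qed

lemma finite_Maps:
  assumes "finite \<Omega>"
  shows "finite (Maps \<Omega> y yh)"
proof (rule finite_subset)
  show "Maps \<Omega> y yh \<subseteq> ones \<Omega> y \<rightarrow>\<^sub>E \<Omega>"
    unfolding Maps_def by auto
  show "finite (ones \<Omega> y \<rightarrow>\<^sub>E \<Omega>)"
    using assms by (intro finite_PiE) (auto simp: ones_def)
qed

lemma Maps_nonempty:
  assumes "finite \<Omega>" "yh \<in> Yhat \<Omega> y"
  shows "Maps \<Omega> y yh \<noteq> {}"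
proof -
  have "finite (ones \<Omega> y)" "finite (ones \<Omega> yh)"
    using assms(1) unfolding ones_def by auto
  moreover have "card (ones \<Omega> y) = card (ones \<Omega> yh)"
    using assms(2) unfolding Yhat_def card1_def by auto
  ultimately obtain h where h: "bij_betw h (ones \<Omega> y) (ones \<Omega> yh)"
    using finite_same_card_bij by blast
  have "restrict h (ones \<Omega> y) \<in> Maps \<Omega> y yh"
    using h unfolding Maps_def bij_betw_def ones_def inj_on_def by (auto simp: PiE_def Pi_def)
  then show ?thesis by blast
qed

lemma Maps_subset_AllMaps:
  "yh \<in> Yhat \<Omega> y \<Longrightarrow> Maps \<Omega> y yh \<subseteq> AllMaps \<Omega> y"
  unfolding AllMaps_def by auto

lemma image_Maps_eq_ones:
  assumes "finite \<Omega>" "yh \<in> Yhat \<Omega> y" "m \<in> Maps \<Omega> y yh"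
  shows "m ` ones \<Omega> y = ones \<Omega> yh"
proof (rule card_subset_eq)
  show "finite (ones \<Omega> yh)"
    using assms(1) unfolding ones_def by auto
  show "m ` ones \<Omega> y \<subseteq> ones \<Omega> yh"
    using assms(3) unfolding Maps_def ones_def by (auto simp: PiE_def Pi_def)
  have "inj_on m (ones \<Omega> y)"
    using assms(3) unfolding Maps_def by auto
  then have "card (m ` ones \<Omega> y) = card (ones \<Omega> y)"
    by (rule card_image)
  also have "\<dots> = card (ones \<Omega> yh)"
    using assms(2) unfolding Yhat_def card1_def by auto
  finally show "card (m ` ones \<Omega> y) = card (ones \<Omega> yh)" .
qed

lemma fL_Maps:
  assumes "finite \<Omega>" "yh \<in> Yhat \<Omega> y" "m \<in> Maps \<Omega> y yh"
  shows "fL \<Omega> y m = yh"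
proof
  fix p
  have image: "m ` ones \<Omega> y = ones \<Omega> yh"
    using assms by (rule image_Maps_eq_ones)
  have "yh \<in> binimg \<Omega>"
    using assms(2) unfolding Yhat_def by auto
  then have "p \<in> \<Omega> \<Longrightarrow> yh p \<in> {0,1}" "p \<notin> \<Omega> \<Longrightarrow> yh p = 0"
    unfolding binimg_def by blast+
  moreover have "p \<in> m ` ones \<Omega> y \<longleftrightarrow> p \<in> \<Omega> \<and> yh p = 1"
    unfolding image by (simp add: ones_def)
  ultimately show "fL \<Omega> y m p = yh p"
    unfolding fL_def by (cases "p \<in> \<Omega>") auto
qed

lemma Gobj_eq_transport_cost_plus_label_cost:
  assumes "finite \<Omega>" "yh \<in> Yhat \<Omega> y" "m \<in> Maps \<Omega> y yh"
  shows "Gobj s \<sigma> \<Omega> y m = transport_cost s \<Omega> y m + label_cost \<sigma> \<Omega> yh"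
proof -
  have inj: "inj_on m (ones \<Omega> y)"
    using assms(3) unfolding Maps_def by auto
  have "Gobj s \<sigma> \<Omega> y m
      = transport_cost s \<Omega> y m + (\<Sum>q\<in>ones \<Omega> y. ln (1 - \<sigma> (m q)) - ln (\<sigma> (m q)))"
    unfolding Gobj_def transport_cost_def sum_Edges sum.distrib[symmetric]
    by (simp add: algebra_simps)
  also have "(\<Sum>q\<in>ones \<Omega> y. ln (1 - \<sigma> (m q)) - ln (\<sigma> (m q))) = label_cost \<sigma> \<Omega> yh"
    unfolding label_cost_def image_Maps_eq_ones[OF assms, symmetric]
    by (simp add: sum.reindex[OF inj])
  finally show ?thesis .
qed

lemma log_likelihood_eq:
  assumes "finite \<Omega>" "yh \<in> binimg \<Omega>"
  shows "(\<Sum>p\<in>\<Omega>. real (yh p) * ln (\<sigma> p) + (1 - real (yh p)) * ln (1 - \<sigma> p))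
     = (\<Sum>p\<in>\<Omega>. ln (1 - \<sigma> p)) - label_cost \<sigma> \<Omega> yh"
proof -
  have "(\<Sum>p\<in>\<Omega>. real (yh p) * ln (\<sigma> p) + (1 - real (yh p)) * ln (1 - \<sigma> p))
      = (\<Sum>p\<in>\<Omega>. ln (1 - \<sigma> p) - (if yh p = 1 then ln (1 - \<sigma> p) - ln (\<sigma> p) else 0))"
  proof (rule sum.cong)
    fix p assume "p \<in> \<Omega>"
    then have "yh p \<in> {0,1}"
      using assms(2) unfolding binimg_def by auto
    then show "real (yh p) * ln (\<sigma> p) + (1 - real (yh p)) * ln (1 - \<sigma> p)
        = ln (1 - \<sigma> p) - (if yh p = 1 then ln (1 - \<sigma> p) - ln (\<sigma> p) else 0)"
      by auto
  qed simp
  also have "\<dots> = (\<Sum>p\<in>\<Omega>. ln (1 - \<sigma> p))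
      - (\<Sum>p\<in>\<Omega>. if yh p = 1 then ln (1 - \<sigma> p) - ln (\<sigma> p) else 0)"
    by (rule sum_subtractf)
  also have "(\<Sum>p\<in>\<Omega>. if yh p = 1 then ln (1 - \<sigma> p) - ln (\<sigma> p) else 0) = label_cost \<sigma> \<Omega> yh"
    unfolding label_cost_def ones_def by (rule sum.inter_filter[OF assms(1), symmetric])
  finally show ?thesis .
qed

lemma Fobj_eq_Min_Gobj:
  assumes "finite \<Omega>" "yh \<in> Yhat \<Omega> y"
  shows "Fobj s \<sigma> \<Omega> y yh = Min (Gobj s \<sigma> \<Omega> y ` Maps \<Omega> y yh) - (\<Sum>p\<in>\<Omega>. ln (1 - \<sigma> p))"
proof -
  have "Gobj s \<sigma> \<Omega> y ` Maps \<Omega> y yh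
      = (\<lambda>m. transport_cost s \<Omega> y m + label_cost \<sigma> \<Omega> yh) ` Maps \<Omega> y yh"
    using Gobj_eq_transport_cost_plus_label_cost[OF assms] by (rule image_cong[OF refl])
  then have "Min (Gobj s \<sigma> \<Omega> y ` Maps \<Omega> y yh)
      = Min (transport_cost s \<Omega> y ` Maps \<Omega> y yh) + label_cost \<sigma> \<Omega> yh"
    using Min_add_commute finite_Maps[OF assms(1)] Maps_nonempty[OF assms] by metis
  moreover have "yh \<in> binimg \<Omega>"
    using assms(2) unfolding Yhat_def by auto
  ultimately show ?thesis
    unfolding Fobj_def by (simp add: log_likelihood_eq[OF assms(1)])
qed

theorem theorem1:
  fixes \<Omega> :: "pixel set" and y :: "pixel \<Rightarrow> nat" and s :: real
    and \<sigma> :: "pixel \<Rightarrow> real" and mstar :: "pixel \<Rightarrow> pixel"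
  assumes "finite \<Omega>"
    and "y \<in> binimg \<Omega>"
    and "s > 0"
    and "\<forall>p\<in>\<Omega>. 0 < \<sigma> p \<and> \<sigma> p < 1"
    and "mstar \<in> AllMaps \<Omega> y"
    and "\<forall>m\<in>AllMaps \<Omega> y. Gobj s \<sigma> \<Omega> y mstar \<le> Gobj s \<sigma> \<Omega> y m"
  shows "fL \<Omega> y mstar \<in> Yhat \<Omega> y
    \<and> (\<forall>yh\<in>Yhat \<Omega> y. Fobj s \<sigma> \<Omega> y (fL \<Omega> y mstar) \<le> Fobj s \<sigma> \<Omega> y yh)
    \<and> mstar \<in> Maps \<Omega> y (fL \<Omega> y mstar)
    \<and> (\<forall>m\<in>Maps \<Omega> y (fL \<Omega> y mstar).
         transport_cost s \<Omega> y mstar \<le> transport_cost s \<Omega> y m)"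
proof -
  obtain y0 where y0: "y0 \<in> Yhat \<Omega> y" "mstar \<in> Maps \<Omega> y y0"
    using assms(5) unfolding AllMaps_def by auto
  have realized: "fL \<Omega> y mstar = y0"
    using assms(1) y0 by (rule fL_Maps)
  have G_min: "Gobj s \<sigma> \<Omega> y mstar \<le> Gobj s \<sigma> \<Omega> y m" if "yh \<in> Yhat \<Omega> y" "m \<in> Maps \<Omega> y yh" for yh m
    using assms(6) Maps_subset_AllMaps that by blast
  have "Fobj s \<sigma> \<Omega> y y0 \<le> Fobj s \<sigma> \<Omega> y yh" if "yh \<in> Yhat \<Omega> y" for yh
  proof -
    have "Min (Gobj s \<sigma> \<Omega> y ` Maps \<Omega> y y0) \<le> Gobj s \<sigma> \<Omega> y mstar"
      using finite_Maps[OF assms(1)] y0(2) by (intro Min_le) auto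
    also have "\<dots> \<le> Min (Gobj s \<sigma> \<Omega> y ` Maps \<Omega> y yh)"
      using G_min[OF that] finite_Maps[OF assms(1)] Maps_nonempty[OF assms(1) that] by simp
    finally show ?thesis
      unfolding Fobj_eq_Min_Gobj[OF assms(1) y0(1)] Fobj_eq_Min_Gobj[OF assms(1) that] by simp
  qed
  moreover have "transport_cost s \<Omega> y mstar \<le> transport_cost s \<Omega> y m" if "m \<in> Maps \<Omega> y y0" for m
    using G_min[OF y0(1) that] Gobj_eq_transport_cost_plus_label_cost[OF assms(1) y0(1)] y0(2) that
    by simp
  ultimately show ?thesis
    unfolding realized using y0 by blast
qed

end
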